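(* For every finite tree $T$, the closed neighborhood ideal $NI(T)$ is normally torsion-free.
   Context: For a simple graph $G$ and a vertex $i$, the closed neighborhood is $N_G[i]=\{j : \{i,j\}\in E(G)\}\cup\{i\}$. With a variable $x_j$ for each vertex $j$ in the polynomial ring over a field $K$, the closed neighborhood ideal of $G$ is $NI(G)=(\prod_{j\in N_G[i]}x_j : i\in V(G))$. An ideal $I$ is normally torsion-free if $\mathrm{Ass}(R/I^k)\subseteq\mathrm{Ass}(R/I)$ for all $k\geq1$. *)

theory Defs
  imports "HOL-Library.Poly_Mapping"
begin

definition is_ideal :: "'a::comm_ring_1 set \<Rightarrow> bool" where
  "is_ideal I \<longleftrightarrow> 0 \<in> I \<and> (\<forall>a\<in>I. \<forall>b\<in>I. a + b \<in> I) \<and> (\<forall>r. \<forall>a\<in>I. r * a \<in> I)"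

definition ideal_gen :: "'a::comm_ring_1 set \<Rightarrow> 'a set" where
  "ideal_gen S = \<Inter>{I. is_ideal I \<and> S \<subseteq> I}"

definition ideal_pow :: "'a::comm_ring_1 set \<Rightarrow> nat \<Rightarrow> 'a set" where
  "ideal_pow I k = ideal_gen {prod_list xs | xs. length xs = k \<and> set xs \<subseteq> I}"

definition prime_ideal :: "'a::comm_ring_1 set \<Rightarrow> bool" where
  "prime_ideal P \<longleftrightarrow> is_ideal P \<and> 1 \<notin> P \<and> (\<forall>a b. a * b \<in> P \<longrightarrow> a \<in> P \<or> b \<in> P)"

definition ideal_colon :: "'a::comm_ring_1 set \<Rightarrow> 'a \<Rightarrow> 'a set" where
  "ideal_colon I f = {g. g * f \<in> I}"

text \<open>Ass(R/I): primes that are annihilators of an element f + I of R/I, i.e. P = (I : f).\<close>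
definition Ass :: "'a::comm_ring_1 set \<Rightarrow> 'a set set" where
  "Ass I = {P. prime_ideal P \<and> (\<exists>f. P = ideal_colon I f)}"

definition normally_torsion_free :: "'a::comm_ring_1 set \<Rightarrow> bool" where
  "normally_torsion_free I \<longleftrightarrow> (\<forall>k\<ge>1. Ass (ideal_pow I k) \<subseteq> Ass I)"

type_synonym ('v, 'k) mpoly = "('v \<Rightarrow>\<^sub>0 nat) \<Rightarrow>\<^sub>0 'k"

definition var :: "'v \<Rightarrow> ('v, 'k::field) mpoly" where
  "var j = Poly_Mapping.single (Poly_Mapping.single j 1) 1"

section \<open>Finite simple graphs on a finite vertex type (V = UNIV)\<close>

definition simple_graph :: "'v set set \<Rightarrow> bool" where
  "simple_graph E \<longleftrightarrow> (\<forall>e\<in>E. \<exists>a b. a \<noteq> b \<and> e = {a, b})"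

definition adj :: "'v set set \<Rightarrow> 'v \<Rightarrow> 'v \<Rightarrow> bool" where
  "adj E a b \<longleftrightarrow> {a, b} \<in> E \<and> a \<noteq> b"

definition connected_graph :: "'v set set \<Rightarrow> bool" where
  "connected_graph E \<longleftrightarrow> (\<forall>a b. (adj E)\<^sup>*\<^sup>* a b)"

definition is_cycle :: "'v set set \<Rightarrow> 'v list \<Rightarrow> bool" where
  "is_cycle E vs \<longleftrightarrow> length vs \<ge> 3 \<and> distinct vs \<and>
     (\<forall>i. Suc i < length vs \<longrightarrow> adj E (vs ! i) (vs ! Suc i)) \<and> adj E (last vs) (hd vs)"

definition is_tree :: "'v set set \<Rightarrow> bool" where
  "is_tree E \<longleftrightarrow> simple_graph E \<and> connected_graph E \<and> (\<nexists>vs. is_cycle E vs)"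

definition closed_nbhd :: "'v set set \<Rightarrow> 'v \<Rightarrow> 'v set" where
  "closed_nbhd E i = {j. {i, j} \<in> E} \<union> {i}"

definition closed_nbhd_ideal :: "'v set set \<Rightarrow> ('v, 'k::field) mpoly set" where
  "closed_nbhd_ideal E = ideal_gen {\<Prod>j\<in>closed_nbhd E i. var j | i. True}"

end

theory Submission
  imports Defs
begin

text \<open>
  For a forest, the \<open>k\<close>-th power of \<open>NI(T)\<close> is the intersection of the \<open>k\<close>-th powers of
  the primes \<open>P_D = (x_v : v \<in> D)\<close>, \<open>D\<close> ranging over the dominating sets. On exponents this is a
  packing/covering duality: a weight \<open>w\<close> lies above a sum of \<open>k\<close> closed-neighbourhood vectors
  iff every dominating set has \<open>w\<close>-weight at least \<open>k\<close>. It is proved greedily, since in a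
  forest every nonempty vertex set \<open>A\<close> contains a vertex \<open>i\<close> all of whose neighbours but one
  meet \<open>A\<close> only in \<open>i\<close>.

  Each \<open>P_D^k\<close> is \<open>P_D\<close>-primary, so every associated prime of \<open>NI(T)^k\<close> is \<open>P_D\<close> for a
  minimal dominating set \<open>D\<close>; and such a \<open>P_D\<close> is associated to \<open>NI(T)\<close> itself, as the
  annihilator of the product of the variables outside \<open>D\<close>.
\<close>

section \<open>Ideals\<close>

lemma is_ideal_sum:
  assumes "is_ideal I" "\<And>x. x \<in> A \<Longrightarrow> f x \<in> I"
  shows "sum f A \<in> I"
  using assms(2) by (induction A rule: infinite_finite_induct) (use assms(1) in \<open>auto simp: is_ideal_def\<close>)

lemma is_ideal_mult_left: "is_ideal I \<Longrightarrow> a \<in> I \<Longrightarrow> r * a \<in> I"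
  by (simp add: is_ideal_def)

lemma is_ideal_ideal_gen: "is_ideal (ideal_gen S)"
  unfolding is_ideal_def ideal_gen_def by auto

lemma ideal_gen_superset: "S \<subseteq> ideal_gen S"
  unfolding ideal_gen_def by auto

lemma ideal_gen_least: "is_ideal I \<Longrightarrow> S \<subseteq> I \<Longrightarrow> ideal_gen S \<subseteq> I"
  unfolding ideal_gen_def by auto

lemma ideal_pow_1:
  assumes "is_ideal I"
  shows "ideal_pow I 1 = I"
proof -
  have "{prod_list xs | xs. length xs = 1 \<and> set xs \<subseteq> I} = I"
    by (auto simp: length_Suc_conv intro!: exI[of _ "[_]"])
  then show ?thesis
    unfolding ideal_pow_def using assms ideal_gen_least ideal_gen_superset by blast
qed

lemma prime_ideal_prod:
  assumes "prime_ideal P" "finite A" "(\<Prod>x\<in>A. f x) \<in> P"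
  shows "\<exists>x\<in>A. f x \<in> P"
  using assms(2,3) by (induction A rule: finite_induct) (use assms(1) in \<open>auto simp: prime_ideal_def\<close>)

lemma prime_ideal_power: "prime_ideal P \<Longrightarrow> x ^ n \<in> P \<Longrightarrow> x \<in> P"
  by (induction n) (auto simp: prime_ideal_def)

lemma prime_ideal_Inter_subset:
  assumes "prime_ideal P" "finite S" "\<And>i. i \<in> S \<Longrightarrow> is_ideal (I i)" "(\<Inter>i\<in>S. I i) \<subseteq> P"
  shows "\<exists>i\<in>S. I i \<subseteq> P"
proof (rule ccontr)
  assume "\<not> ?thesis"
  then obtain a where a: "\<And>i. i \<in> S \<Longrightarrow> a i \<in> I i \<and> a i \<notin> P"
    using bchoice[of S "\<lambda>i x. x \<in> I i \<and> x \<notin> P"] by blast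
  have "(\<Prod>i\<in>S. a i) \<in> I j" if "j \<in> S" for j
  proof -
    have "(\<Prod>i\<in>S. a i) = (\<Prod>i\<in>S - {j}. a i) * a j"
      using assms(2) that by (simp add: prod.remove mult.commute)
    then show ?thesis using is_ideal_mult_left[OF assms(3)[OF that]] a[OF that] by simp
  qed
  then have "(\<Prod>i\<in>S. a i) \<in> P" using assms(4) by blast
  then show False using prime_ideal_prod[OF assms(1,2)] a by blast
qed

section \<open>Monomial ideals\<close>

definition monomial :: "('v \<Rightarrow>\<^sub>0 nat) \<Rightarrow> ('v, 'k::field) mpoly" where
  "monomial a = Poly_Mapping.single a 1"

text \<open>Divisibility of monomials compares exponents pointwise, via \<open>Poly_Mapping.lookup\<close>; the
  library order on \<open>'v \<Rightarrow>\<^sub>0 nat\<close>, where defined, is lexicographic.\<close>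

definition monomial_ideal :: "('v \<Rightarrow>\<^sub>0 nat) set \<Rightarrow> ('v, 'k::field) mpoly set" where
  "monomial_ideal S =
     {f. \<forall>m\<in>Poly_Mapping.keys f. \<exists>s\<in>S. Poly_Mapping.lookup s \<le> Poly_Mapping.lookup m}"

lemma monomial_add: "monomial (a + b) = (monomial a * monomial b :: ('v, 'k::field) mpoly)"
  by (simp add: monomial_def mult_single)

lemma monomial_zero: "monomial 0 = 1"
  by (simp add: monomial_def one_poly_mapping.abs_eq)

lemma keys_monomial [simp]: "Poly_Mapping.keys (monomial a :: ('v, 'k::field) mpoly) = {a}"
  by (simp add: monomial_def)

lemma monomial_sum_list: "monomial (sum_list xs) = prod_list (map monomial xs)"
  by (induction xs) (simp_all add: monomial_zero monomial_add)

lemma var_eq_monomial: "var j = monomial (Poly_Mapping.single j 1)"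
  by (simp add: var_def monomial_def)

lemma poly_mapping_sum_single:
  "f = (\<Sum>m\<in>Poly_Mapping.keys f. Poly_Mapping.single m (Poly_Mapping.lookup f m))"
proof (rule poly_mapping_eqI)
  fix q
  show "Poly_Mapping.lookup f q =
      Poly_Mapping.lookup (\<Sum>m\<in>Poly_Mapping.keys f. Poly_Mapping.single m (Poly_Mapping.lookup f m)) q"
    by (cases "q \<in> Poly_Mapping.keys f") (auto simp: lookup_sum lookup_single when_def in_keys_iff)
qed

lemma is_ideal_monomial_ideal: "is_ideal (monomial_ideal S)"
proof -
  have "f + g \<in> monomial_ideal S" if "f \<in> monomial_ideal S" "g \<in> monomial_ideal S" for f g
    using that keys_add[of f g] by (auto simp: monomial_ideal_def)
  moreover have "r * f \<in> monomial_ideal S" if f: "f \<in> monomial_ideal S" for r f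
    unfolding monomial_ideal_def
  proof (intro CollectI ballI)
    fix m assume "m \<in> Poly_Mapping.keys (r * f)"
    then obtain a b where "m = a + b" "b \<in> Poly_Mapping.keys f"
      using keys_mult[of r f] by blast
    moreover obtain s where "s \<in> S" "Poly_Mapping.lookup s \<le> Poly_Mapping.lookup b"
      using f \<open>b \<in> Poly_Mapping.keys f\<close> by (auto simp: monomial_ideal_def)
    ultimately show "\<exists>s\<in>S. Poly_Mapping.lookup s \<le> Poly_Mapping.lookup m"
      by (auto simp: lookup_add le_fun_def intro: trans_le_add2)
  qed
  moreover have "0 \<in> monomial_ideal S" by (simp add: monomial_ideal_def)
  ultimately show ?thesis unfolding is_ideal_def by blast
qed

lemma monomial_ideal_subset:
  fixes I :: "('v, 'k::field) mpoly set"
  assumes "is_ideal I" "\<And>s. s \<in> S \<Longrightarrow> monomial s \<in> I"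
  shows "monomial_ideal S \<subseteq> I"
proof
  fix f :: "('v, 'k) mpoly" assume f: "f \<in> monomial_ideal S"
  have "Poly_Mapping.single m (Poly_Mapping.lookup f m) \<in> I" if m: "m \<in> Poly_Mapping.keys f" for m
  proof -
    obtain s where s: "s \<in> S" "Poly_Mapping.lookup s \<le> Poly_Mapping.lookup m"
      using f m by (auto simp: monomial_ideal_def)
    then have split: "(m - s) + s = m"
      by (intro poly_mapping_eqI) (simp add: lookup_add lookup_minus le_fun_def)
    have "Poly_Mapping.single m (Poly_Mapping.lookup f m) =
        Poly_Mapping.single (m - s) (Poly_Mapping.lookup f m) * monomial s"
      by (simp add: monomial_def mult_single split)
    then show ?thesis using is_ideal_mult_left[OF assms(1) assms(2)[OF s(1)]] by simp
  qed
  then show "f \<in> I"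
    by (subst poly_mapping_sum_single) (rule is_ideal_sum[OF assms(1)])
qed

lemma ideal_gen_monomials: "ideal_gen (monomial ` S) = monomial_ideal S"
proof
  show "ideal_gen (monomial ` S) \<subseteq> monomial_ideal S"
    by (rule ideal_gen_least[OF is_ideal_monomial_ideal]) (auto simp: monomial_ideal_def)
  show "monomial_ideal S \<subseteq> ideal_gen (monomial ` S)"
    by (rule monomial_ideal_subset[OF is_ideal_ideal_gen]) (auto intro: subsetD[OF ideal_gen_superset])
qed

lemma monomial_ideal_mono: "S \<subseteq> T \<Longrightarrow> monomial_ideal S \<subseteq> monomial_ideal T"
  unfolding monomial_ideal_def by blast

lemma monomial_ideal_mult:
  assumes "f \<in> monomial_ideal S" "g \<in> monomial_ideal T"
  shows "f * g \<in> monomial_ideal {s + t | s t. s \<in> S \<and> t \<in> T}"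
  unfolding monomial_ideal_def
proof (intro CollectI ballI)
  fix m assume "m \<in> Poly_Mapping.keys (f * g)"
  then obtain a b where m: "m = a + b" "a \<in> Poly_Mapping.keys f" "b \<in> Poly_Mapping.keys g"
    using keys_mult[of f g] by blast
  obtain s where "s \<in> S" "Poly_Mapping.lookup s \<le> Poly_Mapping.lookup a"
    using assms(1) m(2) unfolding monomial_ideal_def by blast
  moreover obtain t where "t \<in> T" "Poly_Mapping.lookup t \<le> Poly_Mapping.lookup b"
    using assms(2) m(3) unfolding monomial_ideal_def by blast
  ultimately show "\<exists>u\<in>{s + t | s t. s \<in> S \<and> t \<in> T}. Poly_Mapping.lookup u \<le> Poly_Mapping.lookup m"
    by (intro bexI[of _ "s + t"]) (auto simp: m(1) lookup_add le_fun_def add_mono)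
qed

lemma prod_list_in_monomial_ideal:
  assumes "set fs \<subseteq> monomial_ideal (range e)"
  shows "prod_list fs \<in> monomial_ideal {sum_list (map e xs) | xs. length xs = length fs}"
  using assms
proof (induction fs)
  case Nil
  show ?case by (auto simp: monomial_ideal_def simp flip: monomial_zero)
next
  case (Cons f fs)
  have sums: "{s + t | s t. s \<in> range e \<and> t \<in> {sum_list (map e xs) | xs. length xs = length fs}}
      \<subseteq> {sum_list (map e xs) | xs. length xs = length (f # fs)}"
    by (force intro: exI[of _ "_ # _"])
  have "f * prod_list fs \<in> monomial_ideal
      {s + t | s t. s \<in> range e \<and> t \<in> {sum_list (map e xs) | xs. length xs = length fs}}"
    using Cons by (intro monomial_ideal_mult) simp_all
  then show ?case
    using monomial_ideal_mono[OF sums] by auto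
qed

lemma ideal_pow_monomial_ideal:
  "ideal_pow (monomial_ideal (range e)) k = monomial_ideal {sum_list (map e xs) | xs. length xs = k}"
proof
  show "ideal_pow (monomial_ideal (range e)) k \<subseteq> monomial_ideal {sum_list (map e xs) | xs. length xs = k}"
    unfolding ideal_pow_def
    by (rule ideal_gen_least[OF is_ideal_monomial_ideal]) (auto dest: prod_list_in_monomial_ideal)
  have "monomial (e i) \<in> monomial_ideal (range e)" for i
    by (auto simp: monomial_ideal_def)
  then have "monomial (sum_list (map e xs)) \<in> ideal_pow (monomial_ideal (range e)) (length xs)" for xs
    unfolding ideal_pow_def monomial_sum_list
    by (intro subsetD[OF ideal_gen_superset]) (auto intro!: exI[of _ "map (monomial \<circ> e) xs"])
  then show "monomial_ideal {sum_list (map e xs) | xs. length xs = k} \<subseteq> ideal_pow (monomial_ideal (range e)) k"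
    unfolding ideal_pow_def by (intro monomial_ideal_subset[OF is_ideal_ideal_gen]) auto
qed

section \<open>Powers of primes generated by variables\<close>

definition deg_in :: "'v set \<Rightarrow> ('v \<Rightarrow>\<^sub>0 nat) \<Rightarrow> nat" where
  "deg_in C m = (\<Sum>v\<in>C. Poly_Mapping.lookup m v)"

text \<open>\<open>deg_ideal C k\<close> is the \<open>k\<close>-th power of the prime ideal generated by the variables in \<open>C\<close>.\<close>

definition deg_ideal :: "'v set \<Rightarrow> nat \<Rightarrow> ('v, 'k::field) mpoly set" where
  "deg_ideal C k = {f. \<forall>m\<in>Poly_Mapping.keys f. k \<le> deg_in C m}"

lemma deg_in_add: "deg_in C (a + b) = deg_in C a + deg_in C b"
  by (simp add: deg_in_def lookup_add sum.distrib)

lemma deg_in_mono: "finite C' \<Longrightarrow> C \<subseteq> C' \<Longrightarrow> deg_in C m \<le> deg_in C' m"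
  unfolding deg_in_def by (rule sum_mono2) auto

lemma deg_ideal_0 [simp]: "deg_ideal C 0 = UNIV"
  by (simp add: deg_ideal_def)

lemma deg_ideal_mult:
  assumes "f \<in> deg_ideal C k" "g \<in> deg_ideal C l"
  shows "f * g \<in> deg_ideal C (k + l)"
  unfolding deg_ideal_def
proof (intro CollectI ballI)
  fix m assume "m \<in> Poly_Mapping.keys (f * g)"
  then obtain a b where "m = a + b" "a \<in> Poly_Mapping.keys f" "b \<in> Poly_Mapping.keys g"
    using keys_mult[of f g] by blast
  with assms show "k + l \<le> deg_in C m"
    by (auto simp: deg_ideal_def deg_in_add intro: add_mono)
qed

lemma deg_ideal_mono: "finite C' \<Longrightarrow> C \<subseteq> C' \<Longrightarrow> deg_ideal C k \<subseteq> deg_ideal C' k"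
  by (auto simp: deg_ideal_def intro: order_trans[OF _ deg_in_mono])

lemma var_power_in_deg_ideal:
  assumes "finite C" "c \<in> C"
  shows "var c ^ n \<in> deg_ideal C n"
proof (induction n)
  case (Suc n)
  have "var c \<in> deg_ideal C 1"
    using assms by (simp add: var_def deg_ideal_def deg_in_def lookup_single when_def)
  from deg_ideal_mult[OF this Suc.IH] show ?case by simp
qed simp

lemma deg_ideal_1_subset:
  fixes P :: "('v, 'k::field) mpoly set"
  assumes "is_ideal P" "\<And>v. v \<in> C \<Longrightarrow> var v \<in> P"
  shows "deg_ideal C 1 \<subseteq> P"
proof -
  have "deg_ideal C 1 \<subseteq> (monomial_ideal ((\<lambda>v. Poly_Mapping.single v 1) ` C) :: ('v, 'k) mpoly set)"
  proof (rule subsetI, unfold monomial_ideal_def, intro CollectI ballI)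
    fix g m assume "g \<in> deg_ideal C 1" "m \<in> Poly_Mapping.keys g"
    then have "deg_in C m \<noteq> 0" by (fastforce simp: deg_ideal_def)
    then obtain v where "v \<in> C" "Poly_Mapping.lookup m v \<noteq> 0"
      unfolding deg_in_def by (rule sum.not_neutral_contains_not_neutral)
    then show "\<exists>s\<in>(\<lambda>v. Poly_Mapping.single v 1) ` C. Poly_Mapping.lookup s \<le> Poly_Mapping.lookup m"
      by (intro bexI[of _ "Poly_Mapping.single v 1"]) (auto simp: le_fun_def lookup_single when_def)
  qed
  also have "\<dots> \<subseteq> P"
    using assms by (intro monomial_ideal_subset) (auto simp: var_eq_monomial)
  finally show ?thesis .
qed

lemma lookup_mult_unique_sum:
  assumes "\<And>a b. a \<in> Poly_Mapping.keys f \<Longrightarrow> b \<in> Poly_Mapping.keys g \<Longrightarrow> a + b = a0 + b0 \<Longrightarrow> a = a0 \<and> b = b0"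
  shows "Poly_Mapping.lookup (f * g) (a0 + b0) = Poly_Mapping.lookup f a0 * Poly_Mapping.lookup g b0"
proof -
  have "Poly_Mapping.lookup (f * g) (a0 + b0) =
      (\<Sum>(a, b). Poly_Mapping.lookup f a * Poly_Mapping.lookup g b when a0 + b0 = a + b)"
    by transfer (rule prod_fun_unfold_prod)
  also have "\<dots> = (\<Sum>ab. (case ab of (a, b) \<Rightarrow> Poly_Mapping.lookup f a * Poly_Mapping.lookup g b)
                      when (a0, b0) = ab)"
  proof (rule Sum_any.cong, clarify)
    fix a b
    show "(Poly_Mapping.lookup f a * Poly_Mapping.lookup g b when a0 + b0 = a + b) =
        (Poly_Mapping.lookup f a * Poly_Mapping.lookup g b when (a0, b0) = (a, b))"
      using assms[of a b] by (cases "a \<in> Poly_Mapping.keys f \<and> b \<in> Poly_Mapping.keys g")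
        (auto simp: when_def in_keys_iff)
  qed
  also have "\<dots> = Poly_Mapping.lookup f a0 * Poly_Mapping.lookup g b0"
    by simp
  finally show ?thesis .
qed

lemma add_eq_add_le_imp_eq:
  fixes x :: "'a::ordered_cancel_comm_monoid_add"
  assumes "x \<le> x0" "y \<le> y0" "x + y = x0 + y0"
  shows "x = x0 \<and> y = y0"
  using assms add_less_le_mono add_le_less_mono by (metis order_less_irrefl order.not_eq_order_implies_strict)

text \<open>Exponents over an unordered finite type are embedded into \<open>nat \<Rightarrow>\<^sub>0 nat\<close>, whose linear
  order is compatible with addition; a sum of two maxima then has only one decomposition.\<close>

lemma exists_additive_inj_nat_exponents:
  "\<exists>\<psi> :: ('v::finite \<Rightarrow>\<^sub>0 nat) \<Rightarrow> (nat \<Rightarrow>\<^sub>0 nat). inj \<psi> \<and> (\<forall>a b. \<psi> (a + b) = \<psi> a + \<psi> b)"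
proof -
  obtain idx :: "'v \<Rightarrow> nat" where idx: "inj idx"
    using finite_imp_inj_to_nat_seg[of "UNIV :: 'v set"] by auto
  define \<psi> where "\<psi> m = (\<Sum>v\<in>UNIV. Poly_Mapping.single (idx v) (Poly_Mapping.lookup m v))"
    for m :: "'v \<Rightarrow>\<^sub>0 nat"
  have lookup_\<psi>: "Poly_Mapping.lookup (\<psi> m) (idx u) = Poly_Mapping.lookup m u" for m u
    using idx by (simp add: \<psi>_def lookup_sum lookup_single when_def inj_eq)
  have "inj \<psi>"
    by (rule injI, rule poly_mapping_eqI) (metis lookup_\<psi>)
  moreover have "\<psi> (a + b) = \<psi> a + \<psi> b" for a b
    by (simp add: \<psi>_def lookup_add single_add sum.distrib)
  ultimately show ?thesis by blast
qed

lemma exists_unique_sum_decomposition: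
  fixes F G :: "('v::finite \<Rightarrow>\<^sub>0 nat) set"
  assumes "finite F" "F \<noteq> {}" "finite G" "G \<noteq> {}"
  shows "\<exists>a0\<in>F. \<exists>b0\<in>G. \<forall>a\<in>F. \<forall>b\<in>G. a + b = a0 + b0 \<longrightarrow> a = a0 \<and> b = b0"
proof -
  obtain \<psi> :: "('v \<Rightarrow>\<^sub>0 nat) \<Rightarrow> (nat \<Rightarrow>\<^sub>0 nat)" where \<psi>: "inj \<psi>" "\<And>a b. \<psi> (a + b) = \<psi> a + \<psi> b"
    using exists_additive_inj_nat_exponents by blast
  have "Max (\<psi> ` F) \<in> \<psi> ` F" "Max (\<psi> ` G) \<in> \<psi> ` G"
    using assms by simp_all
  then obtain a0 b0 where "a0 \<in> F" "\<psi> a0 = Max (\<psi> ` F)" "b0 \<in> G" "\<psi> b0 = Max (\<psi> ` G)"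
    by (metis imageE)
  moreover have "a = a0 \<and> b = b0" if "a \<in> F" "b \<in> G" "a + b = a0 + b0" for a b
  proof -
    have "\<psi> a \<le> \<psi> a0" "\<psi> b \<le> \<psi> b0"
      using that(1,2) assms \<open>\<psi> a0 = _\<close> \<open>\<psi> b0 = _\<close> by simp_all
    moreover have "\<psi> a + \<psi> b = \<psi> a0 + \<psi> b0"
      using that(3) by (simp flip: \<psi>(2))
    ultimately show ?thesis
      using add_eq_add_le_imp_eq \<psi>(1) by (metis injD)
  qed
  ultimately show ?thesis by blast
qed

lemma min_weight_keys_mult:
  fixes f g :: "('v::finite, 'k::field) mpoly" and w :: "('v \<Rightarrow>\<^sub>0 nat) \<Rightarrow> nat"
  assumes w_add: "\<And>a b. w (a + b) = w a + w b" and "f \<noteq> 0" "g \<noteq> 0"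
  shows "\<exists>m\<in>Poly_Mapping.keys (f * g).
           w m = Min (w ` Poly_Mapping.keys f) + Min (w ` Poly_Mapping.keys g)"
proof -
  define F G where "F = {a \<in> Poly_Mapping.keys f. w a = Min (w ` Poly_Mapping.keys f)}"
    and "G = {b \<in> Poly_Mapping.keys g. w b = Min (w ` Poly_Mapping.keys g)}"
  have "Min (w ` Poly_Mapping.keys f) \<in> w ` Poly_Mapping.keys f"
    and "Min (w ` Poly_Mapping.keys g) \<in> w ` Poly_Mapping.keys g"
    using assms(2,3) by (auto intro!: Min_in)
  then have "F \<noteq> {}" "G \<noteq> {}" by (auto simp: F_def G_def)
  then obtain a0 b0 where a0: "a0 \<in> F" and b0: "b0 \<in> G"
    and unique_FG: "\<And>a b. a \<in> F \<Longrightarrow> b \<in> G \<Longrightarrow> a + b = a0 + b0 \<Longrightarrow> a = a0 \<and> b = b0"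
    using exists_unique_sum_decomposition[of F G] by (auto simp: F_def G_def)
  have unique: "a = a0 \<and> b = b0"
    if ab: "a \<in> Poly_Mapping.keys f" "b \<in> Poly_Mapping.keys g" "a + b = a0 + b0" for a b
  proof -
    have "w a + w b = w a0 + w b0" using ab(3) w_add by metis
    moreover have "Min (w ` Poly_Mapping.keys f) \<le> w a" "Min (w ` Poly_Mapping.keys g) \<le> w b"
      using ab(1,2) by (auto intro!: Min_le)
    moreover have "w a0 = Min (w ` Poly_Mapping.keys f)" "w b0 = Min (w ` Poly_Mapping.keys g)"
      using a0 b0 by (simp_all add: F_def G_def)
    ultimately have "w a = w a0" "w b = w b0"
      by linarith+
    then have "a \<in> F" "b \<in> G"
      using ab(1,2) a0 b0 unfolding F_def G_def by simp_all
    then show ?thesis using unique_FG ab(3) by blast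
  qed
  have "Poly_Mapping.lookup (f * g) (a0 + b0) = Poly_Mapping.lookup f a0 * Poly_Mapping.lookup g b0"
    using unique by (rule lookup_mult_unique_sum)
  moreover have "Poly_Mapping.lookup f a0 \<noteq> 0" "Poly_Mapping.lookup g b0 \<noteq> 0"
    using a0 b0 by (simp_all add: F_def G_def in_keys_iff)
  ultimately have "a0 + b0 \<in> Poly_Mapping.keys (f * g)"
    by (simp add: in_keys_iff)
  moreover have "w (a0 + b0) = Min (w ` Poly_Mapping.keys f) + Min (w ` Poly_Mapping.keys g)"
    using a0 b0 w_add by (simp add: F_def G_def)
  ultimately show ?thesis by blast
qed

lemma deg_ideal_primary:
  fixes f g :: "('v::finite, 'k::field) mpoly"
  assumes "g * f \<in> deg_ideal C k" "f \<notin> deg_ideal C k"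
  shows "g \<in> deg_ideal C 1"
proof (rule ccontr)
  assume "g \<notin> deg_ideal C 1"
  then obtain a where a: "a \<in> Poly_Mapping.keys g" "deg_in C a = 0"
    by (auto simp: deg_ideal_def)
  obtain b where b: "b \<in> Poly_Mapping.keys f" "deg_in C b < k"
    using assms(2) by (auto simp: deg_ideal_def not_le)
  have "Min (deg_in C ` Poly_Mapping.keys g) = 0"
    using a Min_le[of "deg_in C ` Poly_Mapping.keys g" "deg_in C a"] by simp
  moreover have "Min (deg_in C ` Poly_Mapping.keys f) \<le> deg_in C b"
    using b(1) by (intro Min_le) auto
  then have "Min (deg_in C ` Poly_Mapping.keys f) < k"
    using b(2) by linarith
  moreover have "f \<noteq> 0" "g \<noteq> 0" using a b by auto
  ultimately obtain m where "m \<in> Poly_Mapping.keys (g * f)" "deg_in C m < k"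
    using min_weight_keys_mult[of "deg_in C" g f] deg_in_add by fastforce
  then show False using assms(1) by (auto simp: deg_ideal_def)
qed

lemma is_ideal_deg_ideal: "is_ideal (deg_ideal C k :: ('v, 'k::field) mpoly set)"
  unfolding is_ideal_def
proof (intro conjI ballI allI)
  show "0 \<in> deg_ideal C k" by (simp add: deg_ideal_def)
next
  fix f g :: "('v, 'k) mpoly" assume "f \<in> deg_ideal C k" "g \<in> deg_ideal C k"
  then show "f + g \<in> deg_ideal C k"
    using keys_add[of f g] by (auto simp: deg_ideal_def)
next
  fix r f :: "('v, 'k) mpoly" assume "f \<in> deg_ideal C k"
  then show "r * f \<in> deg_ideal C k"
    using deg_ideal_mult[of r C 0 f k] by simp
qed

lemma prime_ideal_deg_ideal: "prime_ideal (deg_ideal C 1 :: ('v::finite, 'k::field) mpoly set)"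
proof -
  have "(1 :: ('v, 'k) mpoly) \<notin> deg_ideal C 1"
    by (simp add: deg_ideal_def deg_in_def)
  then show ?thesis
    unfolding prime_ideal_def using is_ideal_deg_ideal deg_ideal_primary by blast
qed

lemma Ass_Inter_deg_ideal:
  fixes \<D> :: "'v::finite set set"
  assumes "P \<in> Ass (\<Inter>D\<in>\<D>. deg_ideal D k :: ('v, 'k::field) mpoly set)"
  shows "\<exists>D\<in>\<D>. P = deg_ideal D 1 \<and> (\<forall>D'\<in>\<D>. D' \<subseteq> D \<longrightarrow> D' = D)"
proof -
  obtain f where prime: "prime_ideal P"
    and P_iff: "\<And>g. g \<in> P \<longleftrightarrow> (\<forall>D\<in>\<D>. g * f \<in> deg_ideal D k)"
    using assms unfolding Ass_def ideal_colon_def by blast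
  define S where "S = {D \<in> \<D>. f \<notin> deg_ideal D k}"
  have P_subset: "P \<subseteq> deg_ideal D 1" if "D \<in> S" for D
    using that deg_ideal_primary[of _ f D k] by (auto simp: S_def P_iff)
  have "h \<in> P" if "h \<in> (\<Inter>D\<in>S. deg_ideal D k)" for h
    unfolding P_iff
  proof
    fix D assume "D \<in> \<D>"
    show "h * f \<in> deg_ideal D k"
    proof (cases "D \<in> S")
      case True
      then show ?thesis using that deg_ideal_mult[of h D k f 0] by simp
    next
      case False
      then show ?thesis using \<open>D \<in> \<D>\<close> deg_ideal_mult[of h D 0 f k] by (simp add: S_def)
    qed
  qed
  then have "(\<Inter>D\<in>S. deg_ideal D k) \<subseteq> P" by blast
  then have "\<exists>D\<in>S. deg_ideal D k \<subseteq> P"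
    by (intro prime_ideal_Inter_subset[OF prime finite] is_ideal_deg_ideal)
  then obtain D0 where "D0 \<in> S" and D0_k: "deg_ideal D0 k \<subseteq> P" ..
  have "var v \<in> P" if "v \<in> D0" for v
    using var_power_in_deg_ideal[OF finite that, of k] D0_k prime_ideal_power[OF prime] by blast
  then have D0: "D0 \<in> S" "deg_ideal D0 1 \<subseteq> P"
    using \<open>D0 \<in> S\<close> deg_ideal_1_subset prime by (auto simp: prime_ideal_def)
  obtain D where D: "D \<in> {D' \<in> \<D>. D' \<subseteq> D0}" "\<forall>D'\<in>{D' \<in> \<D>. D' \<subseteq> D0}. D' \<subseteq> D \<longrightarrow> D = D'"
    using finite_has_minimal[of "{D' \<in> \<D>. D' \<subseteq> D0}"] D0(1) by (auto simp: S_def)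
  then have "D \<in> S"
    using D0(1) deg_ideal_mono[of D0 D k] by (auto simp: S_def)
  moreover have "deg_ideal D 1 \<subseteq> P"
    using D(1) D0(2) deg_ideal_mono[of D0 D 1] by auto
  ultimately have "P = deg_ideal D 1"
    using P_subset by blast
  with D show ?thesis by blast
qed

lemma deg_ideal_in_Ass_Inter:
  fixes \<D> :: "'v::finite set set"
  assumes "D \<in> \<D>" "\<forall>D'\<in>\<D>. D' \<subseteq> D \<longrightarrow> D' = D"
  shows "deg_ideal D 1 \<in> Ass (\<Inter>D\<in>\<D>. deg_ideal D 1 :: ('v, 'k::field) mpoly set)"
proof -
  define \<chi> where "\<chi> = (\<Sum>v\<in>-D. Poly_Mapping.single v (1::nat))"
  have lookup_\<chi>: "Poly_Mapping.lookup \<chi> v = (if v \<in> D then 0 else 1)" for v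
    unfolding \<chi>_def lookup_sum lookup_single when_def by simp
  define g :: "('v, 'k) mpoly" where "g = monomial \<chi>"
  have g_notin: "g \<notin> deg_ideal D 1"
    by (simp add: g_def deg_ideal_def deg_in_def lookup_\<chi>)
  have g_in: "g \<in> deg_ideal D' 1" if "D' \<in> \<D>" "D' \<noteq> D" for D'
  proof -
    have "\<not> D' \<subseteq> D" using that assms(2) by auto
    then obtain v where "v \<in> D'" "v \<notin> D" by blast
    then have "Poly_Mapping.lookup \<chi> v \<le> deg_in D' \<chi>"
      unfolding deg_in_def by (intro member_le_sum) simp_all
    then show ?thesis using \<open>v \<notin> D\<close> by (simp add: g_def deg_ideal_def lookup_\<chi>)
  qed
  have "h \<in> deg_ideal D 1 \<longleftrightarrow> h * g \<in> (\<Inter>D\<in>\<D>. deg_ideal D 1)" for h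
  proof
    assume "h \<in> deg_ideal D 1"
    then show "h * g \<in> (\<Inter>D\<in>\<D>. deg_ideal D 1)"
      using g_in deg_ideal_mult[of h D 1 g 0] deg_ideal_mult[of h _ 0 g 1] by fastforce
  next
    assume "h * g \<in> (\<Inter>D\<in>\<D>. deg_ideal D 1)"
    then show "h \<in> deg_ideal D 1"
      using assms(1) deg_ideal_primary[OF _ g_notin] by blast
  qed
  then have "deg_ideal D 1 = ideal_colon (\<Inter>D\<in>\<D>. deg_ideal D 1) g"
    by (auto simp: ideal_colon_def)
  with prime_ideal_deg_ideal[of D] show ?thesis unfolding Ass_def by blast
qed

section \<open>Forests\<close>

lemma mem_closed_nbhd: "b \<in> closed_nbhd E j \<longleftrightarrow> b = j \<or> {j, b} \<in> E"
  by (auto simp: closed_nbhd_def)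

lemma closed_nbhd_sym: "b \<in> closed_nbhd E j \<longleftrightarrow> j \<in> closed_nbhd E b"
  by (auto simp: closed_nbhd_def insert_commute)

lemma simple_graph_edge_neq: "simple_graph E \<Longrightarrow> {a, b} \<in> E \<Longrightarrow> a \<noteq> b"
  unfolding simple_graph_def by (metis doubleton_eq_iff)

definition simple_path :: "'v set set \<Rightarrow> 'v list \<Rightarrow> bool" where
  "simple_path E ps \<longleftrightarrow> distinct ps \<and> (\<forall>t. Suc t < length ps \<longrightarrow> {ps ! t, ps ! Suc t} \<in> E)"

lemma simple_path_snoc:
  assumes "simple_path E ps" "ps \<noteq> []" "c \<notin> set ps" "{last ps, c} \<in> E"
  shows "simple_path E (ps @ [c])"
  unfolding simple_path_def
proof (intro conjI allI impI)
  show "distinct (ps @ [c])" using assms(1,3) by (simp add: simple_path_def)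
  fix t assume t: "Suc t < length (ps @ [c])"
  show "{(ps @ [c]) ! t, (ps @ [c]) ! Suc t} \<in> E"
  proof (cases "Suc t < length ps")
    case True then show ?thesis using assms(1) by (simp add: nth_append simple_path_def)
  next
    case False
    then have "t = length ps - 1" "Suc t = length ps" using t by simp_all
    then show ?thesis using assms(2,4) by (simp add: nth_append last_conv_nth)
  qed
qed

lemma simple_path_chord_is_cycle:
  assumes "simple_graph E" "simple_path E ps" "j + 2 < length ps" "{last ps, ps ! j} \<in> E"
  shows "is_cycle E (drop j ps)"
  unfolding is_cycle_def adj_def
proof (intro conjI allI impI)
  show "3 \<le> length (drop j ps)" "distinct (drop j ps)"
    using assms(2,3) by (simp_all add: simple_path_def)
  show "{last (drop j ps), hd (drop j ps)} \<in> E"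
    using assms(3,4) by (simp add: hd_drop_conv_nth)
  then show "last (drop j ps) \<noteq> hd (drop j ps)"
    by (rule simple_graph_edge_neq[OF assms(1)])
  fix t assume "Suc t < length (drop j ps)"
  then show edge: "{drop j ps ! t, drop j ps ! Suc t} \<in> E"
    using assms(2) by (simp add: simple_path_def add.commute)
  show "drop j ps ! t \<noteq> drop j ps ! Suc t"
    by (rule simple_graph_edge_neq[OF assms(1) edge])
qed

lemma acyclic_path_last_neighbour:
  assumes sg: "simple_graph E" and acyclic: "\<nexists>vs. is_cycle E vs"
    and path: "simple_path E ps" and c: "{last ps, c} \<in> E" "c \<in> set ps"
  shows "2 \<le> length ps \<and> c = ps ! (length ps - 2)"
proof -
  obtain j where j: "j < length ps" "ps ! j = c" using c(2) by (auto simp: in_set_conv_nth)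
  have "c \<noteq> last ps" using simple_graph_edge_neq[OF sg c(1)] by simp
  moreover have "ps \<noteq> []" using c(2) by auto
  ultimately have "j \<noteq> length ps - 1" using j by (auto simp: last_conv_nth)
  moreover have "\<not> j + 2 < length ps"
    using simple_path_chord_is_cycle[OF sg path] c(1) j(2) acyclic by auto
  ultimately have "2 \<le> length ps" "j = length ps - 2" using j(1) by arith+
  then show ?thesis using j(2) by simp
qed

lemma longest_path_end_almost_pendant:
  assumes sg: "simple_graph E" and acyclic: "\<nexists>vs. is_cycle E vs"
    and path: "simple_path E ps" "ps \<noteq> []" "last ps \<in> A"
    and longest: "\<And>qs. simple_path E qs \<Longrightarrow> qs \<noteq> [] \<Longrightarrow> last qs \<in> A \<Longrightarrow> length qs \<le> length ps"
    and c: "{last ps, c} \<in> E" "c \<notin> set ps"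
  shows "closed_nbhd E c \<inter> A \<subseteq> {last ps}"
proof (rule subsetI, rule ccontr)
  have path_c: "simple_path E (ps @ [c])"
    using simple_path_snoc[OF path(1,2) c(2,1)] .
  fix d assume d: "d \<in> closed_nbhd E c \<inter> A" "d \<notin> {last ps}"
  show False
  proof (cases "d = c")
    case True
    then show False using longest[OF path_c] d by simp
  next
    case False
    then have cd: "{c, d} \<in> E" using d(1) by (simp add: mem_closed_nbhd)
    show False
    proof (cases "d \<in> set ps")
      case True
      then have "d = last ps"
        using acyclic_path_last_neighbour[OF sg acyclic path_c, of d] cd path(2)
        by (auto simp: nth_append last_conv_nth)
      then show False using d(2) by simp
    next
      case False
      then have "simple_path E (ps @ [c] @ [d])"
        using simple_path_snoc[OF path_c] cd \<open>d \<noteq> c\<close> by simp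
      then show False using longest[of "ps @ [c, d]"] d by simp
    qed
  qed
qed

lemma acyclic_exists_almost_pendant:
  fixes E :: "'v::finite set set"
  assumes sg: "simple_graph E" and acyclic: "\<nexists>vs. is_cycle E vs" and "A \<noteq> {}"
  shows "\<exists>i\<in>A. \<exists>p. \<forall>c. {i, c} \<in> E \<longrightarrow> c \<noteq> p \<longrightarrow> closed_nbhd E c \<inter> A \<subseteq> {i}"
proof -
  define ends_in_A where "ends_in_A ps \<longleftrightarrow> ps \<noteq> [] \<and> last ps \<in> A \<and> simple_path E ps" for ps
  obtain a where "a \<in> A" using assms(3) by blast
  then have "ends_in_A [a]" by (simp add: ends_in_A_def simple_path_def)
  moreover have "length ps < Suc (card (UNIV :: 'v set))" if "ends_in_A ps" for ps
    using that card_mono[of UNIV "set ps"] distinct_card[of ps]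
    by (simp add: ends_in_A_def simple_path_def)
  ultimately obtain ps where ps: "ends_in_A ps" and longest: "\<And>qs. ends_in_A qs \<Longrightarrow> length qs \<le> length ps"
    using ex_has_greatest_nat[of ends_in_A "[a]" length] by metis
  define p where "p = (if 2 \<le> length ps then ps ! (length ps - 2) else last ps)"
  have "closed_nbhd E c \<inter> A \<subseteq> {last ps}" if "{last ps, c} \<in> E" "c \<noteq> p" for c
  proof (rule longest_path_end_almost_pendant[OF sg acyclic _ _ _ _ that(1)])
    show "c \<notin> set ps"
      using acyclic_path_last_neighbour[OF sg acyclic _ that(1)] ps that(2) by (auto simp: ends_in_A_def p_def)
  qed (use ps longest in \<open>auto simp: ends_in_A_def\<close>)
  moreover have "last ps \<in> A" using ps by (simp add: ends_in_A_def)
  ultimately show ?thesis by blast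
qed

section \<open>Dominating sets and neighbourhood packings\<close>

definition dominating :: "'v set set \<Rightarrow> 'v set \<Rightarrow> bool" where
  "dominating E D \<longleftrightarrow> (\<forall>i. closed_nbhd E i \<inter> D \<noteq> {})"

text \<open>\<open>nbhd_packable E k w\<close> says that the monomial with exponent \<open>w\<close> lies in \<open>NI(E)^k\<close>.\<close>

definition nbhd_packable :: "'v set set \<Rightarrow> nat \<Rightarrow> ('v \<Rightarrow> nat) \<Rightarrow> bool" where
  "nbhd_packable E k w \<longleftrightarrow>
     (\<exists>xs. length xs = k \<and> (\<forall>v. length (filter (\<lambda>x. v \<in> closed_nbhd E x) xs) \<le> w v))"

lemma length_le_sum_over_dominating:
  fixes D :: "'v::finite set"
  assumes "dominating E D"
  shows "length xs \<le> (\<Sum>v\<in>D. length (filter (\<lambda>x. v \<in> closed_nbhd E x) xs))"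
proof (induction xs)
  case (Cons x xs)
  have "(\<Sum>v\<in>D. length (filter (\<lambda>y. v \<in> closed_nbhd E y) (x # xs))) =
      (\<Sum>v\<in>D. (if v \<in> closed_nbhd E x then 1 else 0) + length (filter (\<lambda>y. v \<in> closed_nbhd E y) xs))"
    by (rule sum.cong) auto
  also have "\<dots> = card (D \<inter> closed_nbhd E x) + (\<Sum>v\<in>D. length (filter (\<lambda>y. v \<in> closed_nbhd E y) xs))"
    by (simp add: sum.distrib sum.If_cases)
  finally have "(\<Sum>v\<in>D. length (filter (\<lambda>y. v \<in> closed_nbhd E y) (x # xs))) =
      card (D \<inter> closed_nbhd E x) + (\<Sum>v\<in>D. length (filter (\<lambda>y. v \<in> closed_nbhd E y) xs))" .
  moreover have "1 \<le> card (D \<inter> closed_nbhd E x)"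
    using assms by (auto simp: dominating_def Suc_le_eq card_gt_0_iff Int_commute)
  ultimately show ?case
    using Cons.IH by simp
qed simp

lemma nbhd_packable_imp_dominating_bound:
  fixes D :: "'v::finite set"
  assumes "nbhd_packable E k w" "dominating E D"
  shows "k \<le> (\<Sum>v\<in>D. w v)"
proof -
  obtain xs where xs: "length xs = k" "\<And>v. length (filter (\<lambda>x. v \<in> closed_nbhd E x) xs) \<le> w v"
    using assms(1) by (auto simp: nbhd_packable_def)
  have "length xs \<le> (\<Sum>v\<in>D. length (filter (\<lambda>x. v \<in> closed_nbhd E x) xs))"
    using assms(2) by (rule length_le_sum_over_dominating)
  also have "\<dots> \<le> (\<Sum>v\<in>D. w v)"
    using xs(2) by (rule sum_mono)
  finally show ?thesis using xs(1) by simp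
qed

lemma exists_dominant_in_nbhd:
  assumes "i \<in> A" "\<forall>c. {i, c} \<in> E \<longrightarrow> c \<noteq> p \<longrightarrow> closed_nbhd E c \<inter> A \<subseteq> {i}"
    and "B \<subseteq> closed_nbhd E i" "B \<noteq> {}"
  shows "\<exists>x\<in>B. \<forall>b\<in>B. \<forall>j\<in>A. b \<in> closed_nbhd E j \<longrightarrow> x \<in> closed_nbhd E j"
proof -
  have sees_only_i: "j = i" if "b \<in> closed_nbhd E i" "b \<noteq> i" "b \<noteq> p" "j \<in> A" "b \<in> closed_nbhd E j" for b j
  proof -
    have "{i, b} \<in> E" using that(1,2) by (simp add: mem_closed_nbhd)
    then have "closed_nbhd E b \<inter> A \<subseteq> {i}" using assms(2) that(3) by blast
    moreover have "j \<in> closed_nbhd E b" using that(5) closed_nbhd_sym[of b E j] by blast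
    ultimately show ?thesis using that(4) by blast
  qed
  \<comment> \<open>Prefer \<open>p\<close>, then \<open>i\<close>; every other neighbour of \<open>i\<close> sees only \<open>i\<close> in \<open>A\<close>.\<close>
  define x where "x = (if p \<in> B then p else if i \<in> B then i else SOME x. x \<in> B)"
  have "x \<in> B" using assms(4) by (simp add: x_def some_in_eq)
  moreover have "x \<in> closed_nbhd E j" if b: "b \<in> B" "j \<in> A" "b \<in> closed_nbhd E j" for b j
  proof (cases "j = i")
    case True
    then show ?thesis using assms(3) \<open>x \<in> B\<close> by blast
  next
    case False
    then consider "b = p" | "b = i" using sees_only_i[of b j] b assms(3) by blast
    then show ?thesis
    proof cases
      case 1
      then show ?thesis using b by (simp add: x_def)
    next
      case 2
      then have "{i, j} \<in> E" using b(3) False by (simp add: mem_closed_nbhd insert_commute)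
      then have "j = p" using assms(2) b(2) False by (force simp: mem_closed_nbhd)
      then show ?thesis using 2 b by (auto simp: x_def mem_closed_nbhd)
    qed
  qed
  ultimately show ?thesis by blast
qed

lemma dominating_exchange:
  assumes "i \<in> A" "\<forall>c. {i, c} \<in> E \<longrightarrow> c \<noteq> p \<longrightarrow> closed_nbhd E c \<inter> A \<subseteq> {i}"
    and "A = {j. closed_nbhd E j \<inter> Z = {}}" "dominating E D"
  shows "\<exists>x\<in>D \<inter> closed_nbhd E i. dominating E ((D - closed_nbhd E i) \<union> {x} \<union> Z)"
proof -
  have "D \<inter> closed_nbhd E i \<noteq> {}" using assms(4) by (auto simp: dominating_def)
  then obtain x where x: "x \<in> D \<inter> closed_nbhd E i"
    and dominant: "\<And>b j. b \<in> D \<inter> closed_nbhd E i \<Longrightarrow> j \<in> A \<Longrightarrow> b \<in> closed_nbhd E j \<Longrightarrow> x \<in> closed_nbhd E j"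
    using exists_dominant_in_nbhd[OF assms(1,2), of "D \<inter> closed_nbhd E i"] by blast
  have "closed_nbhd E j \<inter> ((D - closed_nbhd E i) \<union> {x} \<union> Z) \<noteq> {}" for j
  proof (cases "j \<in> A")
    case True
    obtain y where "y \<in> closed_nbhd E j" "y \<in> D" using assms(4) by (auto simp: dominating_def)
    then show ?thesis using dominant[of y j] True by (cases "y \<in> closed_nbhd E i") auto
  next
    case False
    then show ?thesis using assms(3) by auto
  qed
  with x show ?thesis by (auto simp: dominating_def)
qed

lemma sum_diff_indicator_lower_bound:
  fixes w :: "'a \<Rightarrow> nat"
  assumes "finite D" "x \<in> D \<inter> N" "\<And>v. v \<in> N \<Longrightarrow> 1 \<le> w v"
  shows "(\<Sum>v\<in>D - N. w v) + w x \<le> (\<Sum>v\<in>D. w v - (if v \<in> N then 1 else 0)) + 1"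
proof -
  define B where "B = D \<inter> N"
  have "w x + card (B - {x}) \<le> (\<Sum>v\<in>B. w v)"
    using assms sum_mono[of "B - {x}" "\<lambda>_. 1" w] by (simp add: sum.remove B_def)
  moreover have "(\<Sum>v\<in>D. w v) = (\<Sum>v\<in>D - N. w v) + (\<Sum>v\<in>B. w v)"
    unfolding B_def by (metis add.commute assms(1) sum.Int_Diff)
  moreover have "(\<Sum>v\<in>D. w v) = (\<Sum>v\<in>D. (w v - (if v \<in> N then 1 else 0)) + (if v \<in> N then 1 else 0))"
    using assms(3) by (intro sum.cong) auto
  moreover have "\<dots> = (\<Sum>v\<in>D. w v - (if v \<in> N then 1 else 0)) + card B"
    using assms(1) by (simp add: sum.distrib sum.If_cases B_def)
  moreover have "card (B - {x}) + 1 = card B"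
    using assms card_Suc_Diff1[of B x] by (simp add: B_def)
  ultimately show ?thesis by linarith
qed

lemma acyclic_nbhd_packable:
  fixes E :: "'v::finite set set"
  assumes "simple_graph E" "\<nexists>vs. is_cycle E vs"
    and "\<forall>D. dominating E D \<longrightarrow> k \<le> (\<Sum>v\<in>D. w v)"
  shows "nbhd_packable E k w"
  using assms(3)
proof (induction k arbitrary: w)
  case 0
  show ?case by (auto simp: nbhd_packable_def)
next
  case (Suc k)
  define Z where "Z = {v. w v = 0}"
  define A where "A = {j. closed_nbhd E j \<inter> Z = {}}"
  have "(\<Sum>v\<in>Z. w v) = 0" by (simp add: Z_def)
  then have "\<not> dominating E Z"
    using Suc.prems by auto
  then have "A \<noteq> {}" unfolding A_def dominating_def by auto
  then obtain i p where "i \<in> A" and almost_pendant: "\<forall>c. {i, c} \<in> E \<longrightarrow> c \<noteq> p \<longrightarrow> closed_nbhd E c \<inter> A \<subseteq> {i}"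
    using acyclic_exists_almost_pendant[OF assms(1,2)] by meson
  \<comment> \<open>\<open>w\<close> is positive on the closed neighbourhood of \<open>i\<close>, so this truncated subtraction is exact.\<close>
  define w' where "w' v = w v - (if v \<in> closed_nbhd E i then 1 else 0)" for v
  have w_pos: "1 \<le> w v" if "v \<in> closed_nbhd E i" for v
    using \<open>i \<in> A\<close> that by (auto simp: A_def Z_def)
  have "k \<le> (\<Sum>v\<in>D. w' v)" if D: "dominating E D" for D
  proof -
    obtain x where "x \<in> D \<inter> closed_nbhd E i" and "dominating E ((D - closed_nbhd E i) \<union> {x} \<union> Z)"
      using dominating_exchange[OF \<open>i \<in> A\<close> almost_pendant A_def D] by blast
    then have "Suc k \<le> (\<Sum>v\<in>(D - closed_nbhd E i) \<union> {x} \<union> Z. w v)"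
      using Suc.prems by blast
    also have "\<dots> \<le> (\<Sum>v\<in>D - closed_nbhd E i. w v) + w x + (\<Sum>v\<in>Z. w v)"
      using sum_Un_nat[of "(D - closed_nbhd E i) \<union> {x}" Z w] sum_Un_nat[of "D - closed_nbhd E i" "{x}" w]
      by simp
    also have "\<dots> \<le> (\<Sum>v\<in>D. w' v) + 1"
      unfolding w'_def using sum_diff_indicator_lower_bound[OF finite \<open>x \<in> _\<close> w_pos] by (simp add: Z_def)
    finally show ?thesis by simp
  qed
  then obtain xs where xs: "length xs = k" "\<And>v. length (filter (\<lambda>x. v \<in> closed_nbhd E x) xs) \<le> w' v"
    using Suc.IH by (auto simp: nbhd_packable_def)
  have "length (filter (\<lambda>x. v \<in> closed_nbhd E x) (i # xs)) \<le> w v" for v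
    using xs(2)[of v] w_pos[of v] by (auto simp: w'_def)
  with xs(1) show ?case
    unfolding nbhd_packable_def by (intro exI[of _ "i # xs"]) simp
qed

section \<open>The closed neighbourhood ideal of a forest\<close>

definition nbhd_exponent :: "'v set set \<Rightarrow> 'v \<Rightarrow> ('v \<Rightarrow>\<^sub>0 nat)" where
  "nbhd_exponent E i = (\<Sum>j\<in>closed_nbhd E i. Poly_Mapping.single j 1)"

lemma prod_var_eq_monomial: "(\<Prod>j\<in>A. var j) = monomial (\<Sum>j\<in>A. Poly_Mapping.single j 1)"
  by (induction A rule: infinite_finite_induct) (simp_all add: monomial_zero monomial_add var_eq_monomial)

lemma closed_nbhd_ideal_eq_monomial_ideal:
  "closed_nbhd_ideal E = monomial_ideal (range (nbhd_exponent E))"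
proof -
  have generators: "{\<Prod>j\<in>closed_nbhd E i. var j | i. True} = monomial ` range (nbhd_exponent E)"
    by (auto simp: prod_var_eq_monomial nbhd_exponent_def)
  show ?thesis
    unfolding closed_nbhd_ideal_def generators ideal_gen_monomials ..
qed

lemma lookup_sum_nbhd_exponents:
  fixes E :: "'v::finite set set"
  shows "Poly_Mapping.lookup (sum_list (map (nbhd_exponent E) xs)) v =
    length (filter (\<lambda>x. v \<in> closed_nbhd E x) xs)"
  by (induction xs) (auto simp: nbhd_exponent_def lookup_add lookup_sum lookup_single when_def)

lemma acyclic_closed_nbhd_ideal_pow:
  fixes E :: "'v::finite set set"
  assumes "simple_graph E" "\<nexists>vs. is_cycle E vs"
  shows "ideal_pow (closed_nbhd_ideal E) k =
    (\<Inter>D\<in>{D. dominating E D}. deg_ideal D k :: ('v, 'k::field) mpoly set)"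
proof -
  have "(\<exists>s\<in>{sum_list (map (nbhd_exponent E) xs) | xs. length xs = k}. Poly_Mapping.lookup s \<le> Poly_Mapping.lookup m)
      \<longleftrightarrow> nbhd_packable E k (Poly_Mapping.lookup m)" for m
    by (auto simp: nbhd_packable_def le_fun_def lookup_sum_nbhd_exponents)
  also have "\<dots> m \<longleftrightarrow> (\<forall>D. dominating E D \<longrightarrow> k \<le> deg_in D m)" for m
    using nbhd_packable_imp_dominating_bound acyclic_nbhd_packable[OF assms]
    unfolding deg_in_def by blast
  finally show ?thesis
    unfolding closed_nbhd_ideal_eq_monomial_ideal ideal_pow_monomial_ideal
    by (auto simp: monomial_ideal_def deg_ideal_def)
qed

theorem corollary2p6:
  fixes E :: "'v::finite set set"
  assumes "is_tree E"
  shows "normally_torsion_free (closed_nbhd_ideal E :: ('v, 'k::field) mpoly set)"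
proof -
  have forest: "simple_graph E" "\<nexists>vs. is_cycle E vs"
    using assms by (simp_all add: is_tree_def)
  let ?I = "closed_nbhd_ideal E :: ('v, 'k) mpoly set"
  have "P \<in> Ass ?I" if "P \<in> Ass (ideal_pow ?I k)" for P k
  proof -
    have "P \<in> Ass (\<Inter>D\<in>{D. dominating E D}. deg_ideal D k)"
      using that by (simp only: acyclic_closed_nbhd_ideal_pow[OF forest])
    then obtain D where "dominating E D" "P = deg_ideal D 1"
      and minimal: "\<forall>D'\<in>{D. dominating E D}. D' \<subseteq> D \<longrightarrow> D' = D"
      by (blast dest: Ass_Inter_deg_ideal)
    then have "P \<in> Ass (\<Inter>D\<in>{D. dominating E D}. deg_ideal D 1)"
      using deg_ideal_in_Ass_Inter[where \<D> = "{D. dominating E D}"] minimal by blast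
    also have "(\<Inter>D\<in>{D. dominating E D}. deg_ideal D 1) = ideal_pow ?I 1"
      by (rule acyclic_closed_nbhd_ideal_pow[OF forest, symmetric])
    also have "ideal_pow ?I 1 = ?I"
      unfolding closed_nbhd_ideal_def by (rule ideal_pow_1[OF is_ideal_ideal_gen])
    finally show ?thesis .
  qed
  then show ?thesis
    unfolding normally_torsion_free_def by blast
qed

end
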